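(* Let $k$ be a field of characteristic $0$, $n\ge 2$, and let $v$ be a discrete valuation of $K_n=k((X_1,\ldots,X_n))$ over $k$ (in the sense of the context) with value group $\mathbb{Z}$. Then, by applying a finite number of monoidal transformations and changes of coordinates (and permutations of variables) to $X_1,\ldots,X_n$, one obtains new variables among which there is an element $Y_1$ with $\hat v(Y_1)=1$.
   Context: $R_n=k[[X_1,\ldots,X_n]]$, $M_n=(X_1,\ldots,X_n)$, $K_n$ its quotient field. A discrete valuation of $K_n\mid k$ is a rank-one discrete valuation trivial on $k$ with center $M_n$ in $R_n$. $\widehat K_n$ is the completion of $K_n$ with respect to $v$, $\hat v$ the extension of $v$, $R_{\hat v}$ its valuation ring with maximal ideal $\mathfrak m_{\hat v}$. Monoidal transformation: $k[[X_1,\ldots,X_n]]\to k[[Y_1,\ldots,Y_n]]$, $X_1\mapsto Y_1$, $X_2\mapsto Y_1Y_2$, $X_i\mapsto Y_i$ ($i\ge3$), used when $v(X_2)>v(X_1)$. Change of coordinates: $k[[X_1,\ldots,X_n]]\to L[[Y_1,\ldots,Y_n]]$, $X_1\mapsto Y_1$, $X_i\mapsto Y_i+c_iY_1$ ($i\ge 2$), where $c_i\in R_{\hat v}\setminus\mathfrak m_{\hat v}$ and $L$ is an extension field of $k$. In both cases the new variables $Y_i$ are regarded as elements of $R_{\hat v}\subset \widehat K_n$ (e.g. $Y_i=X_i-c_iX_1$), and transformations may be composed finitely many times. *)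

theory Defs
  imports Main "HOL-Library.Cardinality"
begin

text \<open>Formal power series in the variables indexed by a finite type 'n
  (so n = CARD('n)) with coefficients in 'k: functions from exponent vectors
  to coefficients.\<close>

type_synonym ('n, 'k) mps = "('n \<Rightarrow> nat) \<Rightarrow> 'k"

definition ps_zero :: "('n, 'k::comm_ring_1) mps" where
  "ps_zero = (\<lambda>\<alpha>. 0)"

definition ps_add :: "('n, 'k::comm_ring_1) mps \<Rightarrow> ('n, 'k) mps \<Rightarrow> ('n, 'k) mps" where
  "ps_add f g = (\<lambda>\<alpha>. f \<alpha> + g \<alpha>)"

definition ps_mult :: "('n::finite, 'k::comm_ring_1) mps \<Rightarrow> ('n, 'k) mps \<Rightarrow> ('n, 'k) mps" where
  "ps_mult f g = (\<lambda>\<alpha>. \<Sum>\<beta>\<in>{\<beta>. \<forall>i. \<beta> i \<le> \<alpha> i}. f \<beta> * g (\<lambda>i. \<alpha> i - \<beta> i))"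

definition ps_const :: "'k::comm_ring_1 \<Rightarrow> ('n, 'k) mps" where
  "ps_const c = (\<lambda>\<alpha>. if \<alpha> = (\<lambda>_. 0) then c else 0)"

definition ps_X :: "'n \<Rightarrow> ('n, 'k::comm_ring_1) mps" where
  "ps_X i = (\<lambda>\<alpha>. if \<alpha> = (\<lambda>j. if j = i then 1 else 0) then 1 else 0)"

definition ps_max_ideal :: "('n, 'k::comm_ring_1) mps set" where
  "ps_max_ideal = {f. f (\<lambda>_. 0) = 0}"

text \<open>Valuations on a field, written as integer-valued functions on the nonzero
  elements (the value at 0, meant to be infinity, is irrelevant).\<close>
definition valuation :: "('f::field \<Rightarrow> int) \<Rightarrow> bool" where
  "valuation w \<longleftrightarrow>
     (\<forall>x y. x \<noteq> 0 \<longrightarrow> y \<noteq> 0 \<longrightarrow> w (x * y) = w x + w y) \<and>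
     (\<forall>x y. x \<noteq> 0 \<longrightarrow> y \<noteq> 0 \<longrightarrow> x + y \<noteq> 0 \<longrightarrow> w (x + y) \<ge> min (w x) (w y))"

definition val_ring :: "('f::field \<Rightarrow> int) \<Rightarrow> 'f set" where
  "val_ring w = {x. x = 0 \<or> w x \<ge> 0}"

definition val_close :: "('f::field \<Rightarrow> int) \<Rightarrow> int \<Rightarrow> 'f \<Rightarrow> 'f \<Rightarrow> bool" where
  "val_close w N x y \<longleftrightarrow> x = y \<or> w (x - y) \<ge> N"

definition val_complete :: "('f::field \<Rightarrow> int) \<Rightarrow> bool" where
  "val_complete w \<longleftrightarrow>
     (\<forall>s :: nat \<Rightarrow> 'f. (\<forall>N. \<exists>M. \<forall>m\<ge>M. \<forall>n\<ge>M. val_close w N (s m) (s n)) \<longrightarrow>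
        (\<exists>x. \<forall>N. \<exists>M. \<forall>n\<ge>M. val_close w N (s n) x))"

definition val_dense :: "('f::field \<Rightarrow> int) \<Rightarrow> 'f set \<Rightarrow> bool" where
  "val_dense w A \<longleftrightarrow> (\<forall>x N. \<exists>a\<in>A. val_close w N x a)"

text \<open>Image of the quotient field K_n under an embedding of R_n.\<close>
definition frac_image :: "(('n, 'k::comm_ring_1) mps \<Rightarrow> 'f::field) \<Rightarrow> 'f set" where
  "frac_image \<iota> = {\<iota> f / \<iota> g | f g. g \<noteq> ps_zero}"

text \<open>An extension field L of k inside the valuation ring (coefficients of a
  change of coordinates are taken from such a field).\<close>
definition coeff_subfield ::
  "(('n, 'k::comm_ring_1) mps \<Rightarrow> 'f::field) \<Rightarrow> ('f \<Rightarrow> int) \<Rightarrow> 'f set \<Rightarrow> bool" where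
  "coeff_subfield \<iota> w L \<longleftrightarrow>
     0 \<in> L \<and> 1 \<in> L \<and>
     (\<forall>x\<in>L. \<forall>y\<in>L. x + y \<in> L \<and> x * y \<in> L \<and> - x \<in> L) \<and>
     (\<forall>x\<in>L. x \<noteq> 0 \<longrightarrow> inverse x \<in> L) \<and>
     range (\<lambda>c. \<iota> (ps_const c)) \<subseteq> L \<and> L \<subseteq> val_ring w"

text \<open>One elementary transformation of a system of variables (Y_i), regarded as
  elements of the completion: monoidal transformation, change of coordinates,
  or permutation of the variables.\<close>
inductive transf_step ::
  "(('n, 'k::comm_ring_1) mps \<Rightarrow> 'f::field) \<Rightarrow> ('f \<Rightarrow> int) \<Rightarrow> ('n \<Rightarrow> 'f) \<Rightarrow> ('n \<Rightarrow> 'f) \<Rightarrow> bool"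
  for \<iota> w where
  monoidal: "i \<noteq> j \<Longrightarrow> Y i \<noteq> 0 \<Longrightarrow> Y j \<noteq> 0 \<Longrightarrow> w (Y j) > w (Y i) \<Longrightarrow>
     transf_step \<iota> w Y (Y(j := Y j / Y i))"
| coord_change: "coeff_subfield \<iota> w L \<Longrightarrow>
     (\<forall>j. j \<noteq> i \<longrightarrow> c j \<in> L \<and> c j \<noteq> 0 \<and> w (c j) = 0) \<Longrightarrow>
     transf_step \<iota> w Y (\<lambda>j. if j = i then Y i else Y j - c j * Y i)"
| permute: "bij \<sigma> \<Longrightarrow> transf_step \<iota> w Y (Y \<circ> \<sigma>)"

end

theory Submission
  imports Defs "HOL-Computational_Algebra.Polynomial" "HOL-Library.FuncSet"
begin

text \<open>Monoidal transformations run the Euclidean algorithm on the values of the current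
  variables Y until all nonzero Y_j have a common value g. If g > 1, Hensel's lemma (using
  completeness and characteristic 0) lifts the residues of the units Y_j / Y_i into a subfield of
  units, and a change of coordinates Y_j \<mapsto> Y_j - c_j Y_i pushes the values of all Y_j with
  j \<noteq> i above g.

  To see that this terminates, pick series F, G with w(F) = w(G) + 1 and polynomials P, Q in the
  X_i with the same values. Writing P and Q as polynomials in the current variables gives lower
  bounds for w(P) and w(Q) by the smallest weight of a monomial. After a round, a monomial of
  weight s survives only if g divides s, and g cannot divide both w(P) and w(Q) = w(P) - 1; so one
  of the two bounds increases. As the bounds never exceed the values, eventually g = 1.\<close>

section \<open>Valued fields\<close>

definition val_ge :: "('f::field \<Rightarrow> int) \<Rightarrow> int \<Rightarrow> 'f \<Rightarrow> bool" where
  "val_ge w s x \<longleftrightarrow> x = 0 \<or> s \<le> w x"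

lemma val_ring_iff_val_ge: "x \<in> val_ring w \<longleftrightarrow> val_ge w 0 x"
  by (auto simp: val_ring_def val_ge_def)

lemma val_close_iff_val_ge: "val_close w N x y \<longleftrightarrow> val_ge w N (x - y)"
  by (auto simp: val_close_def val_ge_def)

lemma val_ge_0 [simp]: "val_ge w s 0"
  by (simp add: val_ge_def)

lemma val_ge_mono: "val_ge w s x \<Longrightarrow> r \<le> s \<Longrightarrow> val_ge w r x"
  by (auto simp: val_ge_def)

lemma val_ge_all_imp_zero:
  assumes "\<And>K. val_ge w (int K) x" shows "x = 0"
  using assms[of "nat (w x + 1)"] by (auto simp: val_ge_def split: if_splits)

locale valued_field =
  fixes w :: "'f::field \<Rightarrow> int"
  assumes valuation: "valuation w"
begin

lemma val_mult: "x \<noteq> 0 \<Longrightarrow> y \<noteq> 0 \<Longrightarrow> w (x * y) = w x + w y"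
  using valuation unfolding valuation_def by blast

lemma val_add_ge_min: "x \<noteq> 0 \<Longrightarrow> y \<noteq> 0 \<Longrightarrow> x + y \<noteq> 0 \<Longrightarrow> min (w x) (w y) \<le> w (x + y)"
  using valuation unfolding valuation_def by blast

lemma val_one [simp]: "w 1 = 0"
  using val_mult[of 1 1] by simp

lemma val_uminus: "w (- x) = w x"
proof -
  have "w ((-1) * (-1)) = w (-1) + w (-1)" by (rule val_mult) auto
  then have "w (-1) = 0" by simp
  then show ?thesis using val_mult[of "-1" x] by (cases "x = 0") auto
qed

lemma val_inverse: "x \<noteq> 0 \<Longrightarrow> w (inverse x) = - w x"
  using val_mult[of x "inverse x"] by simp

lemma val_divide: "x \<noteq> 0 \<Longrightarrow> y \<noteq> 0 \<Longrightarrow> w (x / y) = w x - w y"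
  using val_mult[of x "inverse y"] val_inverse[of y] by (simp add: divide_inverse)

lemma val_power: "x \<noteq> 0 \<Longrightarrow> w (x ^ n) = int n * w x"
  by (induction n) (auto simp: val_mult algebra_simps)

lemma val_ge_add: "val_ge w s a \<Longrightarrow> val_ge w s b \<Longrightarrow> val_ge w s (a + b)"
  unfolding val_ge_def using val_add_ge_min[of a b] by force

lemma val_ge_uminus_iff [simp]: "val_ge w s (- a) \<longleftrightarrow> val_ge w s a"
  by (simp add: val_ge_def val_uminus)

lemma val_ge_diff: "val_ge w s a \<Longrightarrow> val_ge w s b \<Longrightarrow> val_ge w s (a - b)"
  using val_ge_add[of s a "- b"] by simp

lemma val_ge_diff_commute: "val_ge w s (a - b) \<longleftrightarrow> val_ge w s (b - a)"
  using val_ge_uminus_iff[of s "a - b"] by simp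

lemma val_ge_mult: "val_ge w s a \<Longrightarrow> val_ge w t b \<Longrightarrow> val_ge w (s + t) (a * b)"
  unfolding val_ge_def using val_mult[of a b] by (cases "a = 0"; cases "b = 0") auto

lemma val_ge_sum: "(\<And>i. i \<in> S \<Longrightarrow> val_ge w s (f i)) \<Longrightarrow> val_ge w s (\<Sum>i\<in>S. f i)"
  by (induction S rule: infinite_finite_induct) (auto intro: val_ge_add)

lemma val_ge_one: "val_ge w 0 1"
  by (simp add: val_ge_def)

lemma val_ge_of_nat: "val_ge w 0 (of_nat n)"
  by (induction n) (auto intro: val_ge_add[OF val_ge_one])

lemma val_add_dominant:
  assumes "a \<noteq> 0" "val_ge w (w a + 1) b" shows "a + b \<noteq> 0 \<and> w (a + b) = w a"
proof -
  have "a + b \<noteq> 0"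
    using assms val_uminus[of a] by (auto simp: val_ge_def add_eq_0_iff2)
  moreover have "val_ge w (w a) (a + b)"
    using val_ge_add[of "w a" a b] assms by (auto simp: val_ge_def)
  moreover have "\<not> val_ge w (w a + 1) (a + b)"
    using val_ge_diff[of "w a + 1" "a + b" b] assms by (auto simp: val_ge_def)
  ultimately show ?thesis by (auto simp: val_ge_def)
qed

lemma val_eq_of_close:
  assumes "z \<noteq> 0" "val_ge w (w z + 1) (p - z)" shows "p \<noteq> 0 \<and> w p = w z"
  using val_add_dominant[OF assms] by simp

lemma val_ring_closed:
  assumes "x \<in> val_ring w" "y \<in> val_ring w"
  shows "x + y \<in> val_ring w" "x - y \<in> val_ring w" "x * y \<in> val_ring w"
  using assms val_ge_add val_ge_diff val_ge_mult[of 0 x 0 y] by (auto simp: val_ring_iff_val_ge)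

end

section \<open>Subfields and polynomials over them\<close>

definition is_subfield :: "'f::field set \<Rightarrow> bool" where
  "is_subfield L \<longleftrightarrow> 0 \<in> L \<and> 1 \<in> L \<and>
     (\<forall>x\<in>L. \<forall>y\<in>L. x + y \<in> L \<and> x * y \<in> L \<and> - x \<in> L) \<and>
     (\<forall>x\<in>L. x \<noteq> 0 \<longrightarrow> inverse x \<in> L)"

definition unit_subfield :: "('f::field \<Rightarrow> int) \<Rightarrow> 'f set \<Rightarrow> bool" where
  "unit_subfield w L \<longleftrightarrow> is_subfield L \<and> L \<subseteq> val_ring w"

lemma coeff_subfield_iff:
  "coeff_subfield \<iota> w L \<longleftrightarrow> unit_subfield w L \<and> range (\<lambda>c. \<iota> (ps_const c)) \<subseteq> L"
  unfolding coeff_subfield_def unit_subfield_def is_subfield_def by blast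

lemma is_subfieldI:
  assumes "0 \<in> L" "1 \<in> L" "\<And>x y. x \<in> L \<Longrightarrow> y \<in> L \<Longrightarrow> x + y \<in> L"
    "\<And>x y. x \<in> L \<Longrightarrow> y \<in> L \<Longrightarrow> x * y \<in> L" "\<And>x. x \<in> L \<Longrightarrow> - x \<in> L"
    "\<And>x. x \<in> L \<Longrightarrow> x \<noteq> 0 \<Longrightarrow> inverse x \<in> L"
  shows "is_subfield L"
  using assms by (simp add: is_subfield_def)

lemma is_subfield_closed:
  assumes "is_subfield L"
  shows subfield_zero: "0 \<in> L" and subfield_one: "1 \<in> L"
    and subfield_add: "x \<in> L \<Longrightarrow> y \<in> L \<Longrightarrow> x + y \<in> L"
    and subfield_mult: "x \<in> L \<Longrightarrow> y \<in> L \<Longrightarrow> x * y \<in> L"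
    and subfield_uminus: "x \<in> L \<Longrightarrow> - x \<in> L"
    and subfield_inverse: "x \<in> L \<Longrightarrow> inverse x \<in> L"
  using assms unfolding is_subfield_def by (metis inverse_zero)+

lemma subfield_diff: "is_subfield L \<Longrightarrow> x \<in> L \<Longrightarrow> y \<in> L \<Longrightarrow> x - y \<in> L"
  using subfield_add subfield_uminus by (metis diff_conv_add_uminus)

lemma subfield_divide: "is_subfield L \<Longrightarrow> x \<in> L \<Longrightarrow> y \<in> L \<Longrightarrow> x / y \<in> L"
  by (simp add: divide_inverse subfield_mult subfield_inverse)

lemma subfield_of_nat: "is_subfield L \<Longrightarrow> of_nat n \<in> L"
  by (induction n) (auto intro: subfield_zero subfield_add subfield_one)

lemma subfield_sum: "is_subfield L \<Longrightarrow> (\<And>i. i \<in> S \<Longrightarrow> f i \<in> L) \<Longrightarrow> (\<Sum>i\<in>S. f i) \<in> L"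
  by (induction S rule: infinite_finite_induct) (auto intro: subfield_zero subfield_add)

definition polys_over :: "'a::zero set \<Rightarrow> 'a poly set" where
  "polys_over L = {p. \<forall>n. coeff p n \<in> L}"

lemma polys_over_pCons_iff [simp]: "pCons a p \<in> polys_over L \<longleftrightarrow> a \<in> L \<and> p \<in> polys_over L"
  by (auto simp: polys_over_def coeff_pCons split: nat.split)

lemma polys_over_coeff: "p \<in> polys_over L \<Longrightarrow> coeff p n \<in> L"
  by (simp add: polys_over_def)

lemma polys_over_mono: "L \<subseteq> L' \<Longrightarrow> polys_over L \<subseteq> polys_over L'"
  by (auto simp: polys_over_def)

lemma polys_over_closed:
  assumes L: "is_subfield L"
  shows polys_over_zero: "0 \<in> polys_over L" and polys_over_one: "1 \<in> polys_over L"
    and polys_over_const: "a \<in> L \<Longrightarrow> [:a:] \<in> polys_over L"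
    and polys_over_monom: "a \<in> L \<Longrightarrow> monom a n \<in> polys_over L"
    and polys_over_add: "p \<in> polys_over L \<Longrightarrow> q \<in> polys_over L \<Longrightarrow> p + q \<in> polys_over L"
    and polys_over_uminus: "p \<in> polys_over L \<Longrightarrow> - p \<in> polys_over L"
    and polys_over_diff: "p \<in> polys_over L \<Longrightarrow> q \<in> polys_over L \<Longrightarrow> p - q \<in> polys_over L"
    and polys_over_mult: "p \<in> polys_over L \<Longrightarrow> q \<in> polys_over L \<Longrightarrow> p * q \<in> polys_over L"
    and polys_over_pderiv: "p \<in> polys_over L \<Longrightarrow> pderiv p \<in> polys_over L"
  using L unfolding polys_over_def
  by (auto simp: coeff_1 coeff_mult coeff_pderiv coeff_pCons subfield_zero subfield_one
      subfield_add subfield_uminus subfield_diff subfield_mult subfield_of_nat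
      simp del: of_nat_Suc split: nat.split intro!: subfield_sum)

lemma polys_over_reduce:
  assumes L: "is_subfield L" and p: "p \<in> polys_over L" "p \<noteq> 0" and q: "q \<in> polys_over L"
  shows "\<exists>r\<in>polys_over L. (r = 0 \<or> degree r < degree p) \<and> p dvd q - r"
  using q
proof (induction "degree q" arbitrary: q rule: less_induct)
  case less
  show ?case
  proof (cases "q \<noteq> 0 \<and> degree p \<le> degree q")
    case False
    then show ?thesis using less.prems by (intro bexI[of _ q]) auto
  next
    case True
    define m where "m = monom (lead_coeff q / lead_coeff p) (degree q - degree p)"
    define q' where "q' = q - m * p"
    have m: "m \<in> polys_over L"
      unfolding m_def using p less.prems
      by (intro polys_over_monom[OF L] subfield_divide[OF L] polys_over_coeff)
    have q': "q' \<in> polys_over L"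
      unfolding q'_def using less.prems m p by (intro polys_over_diff[OF L] polys_over_mult[OF L])
    show ?thesis
    proof (cases "q' = 0")
      case True
      then show ?thesis using polys_over_zero[OF L] by (intro bexI[of _ 0]) (auto simp: q'_def)
    next
      case False
      have "degree (m * p) \<le> degree q"
        using degree_mult_le[of m p] degree_monom_le[of "lead_coeff q / lead_coeff p" "degree q - degree p"] True
        unfolding m_def by linarith
      then have "degree q' \<le> degree q" by (simp add: q'_def degree_diff_le)
      moreover have "coeff q' (degree q) = 0"
        using True p(2) by (simp add: q'_def m_def coeff_monom_mult)
      ultimately have "degree q' < degree q"
        using False by (metis le_neq_implies_less leading_coeff_0_iff)
      then obtain r where r: "r \<in> polys_over L" "r = 0 \<or> degree r < degree p" "p dvd q' - r"
        using less.hyps q' by blast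
      have "q - r = (q' - r) + m * p" by (simp add: q'_def)
      then have "p dvd q - r" using r(3) by (metis dvd_add dvd_triv_right)
      then show ?thesis using r(1,2) by blast
    qed
  qed
qed

lemma pderiv_nonzero_degree_less:
  fixes p :: "'a::idom poly"
  assumes "degree p > 0" "of_nat (degree p) \<noteq> (0::'a)"
  shows "pderiv p \<noteq> 0" "degree (pderiv p) < degree p"
proof -
  have "coeff (pderiv p) (degree p - 1) = of_nat (degree p) * lead_coeff p"
    using assms(1) by (simp add: coeff_pderiv del: of_nat_Suc)
  then show "pderiv p \<noteq> 0" using assms by auto
  have "coeff (pderiv p) i = 0" if "degree p - 1 < i" for i
    using that by (simp add: coeff_pderiv coeff_eq_0)
  then have "degree (pderiv p) \<le> degree p - 1" by (meson degree_le not_le_imp_less)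
  then show "degree (pderiv p) < degree p" using assms(1) by linarith
qed

definition adjoin :: "'f::field set \<Rightarrow> 'f \<Rightarrow> 'f set" where
  "adjoin L c = {poly a c / poly b c | a b. a \<in> polys_over L \<and> b \<in> polys_over L \<and> poly b c \<noteq> 0}"

lemma adjoinI: "a \<in> polys_over L \<Longrightarrow> b \<in> polys_over L \<Longrightarrow> poly b c \<noteq> 0 \<Longrightarrow> poly a c / poly b c \<in> adjoin L c"
  unfolding adjoin_def by blast

lemma adjoinE:
  assumes "x \<in> adjoin L c"
  obtains a b where "a \<in> polys_over L" "b \<in> polys_over L" "poly b c \<noteq> 0" "x = poly a c / poly b c"
  using assms unfolding adjoin_def by blast

lemma subset_adjoin: "is_subfield L \<Longrightarrow> L \<subseteq> adjoin L c"
  using adjoinI[of "[:l:]" L 1 c for l] by (auto simp: polys_over_const polys_over_one polys_over_zero)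

lemma mem_adjoin: "is_subfield L \<Longrightarrow> c \<in> adjoin L c"
  using adjoinI[of "[:0, 1:]" L 1 c] by (simp add: subfield_zero subfield_one polys_over_one polys_over_zero)

lemma adjoin_subfield:
  assumes L: "is_subfield L" shows "is_subfield (adjoin L c)"
proof (rule is_subfieldI)
  show "0 \<in> adjoin L c" "1 \<in> adjoin L c"
    using L subset_adjoin subfield_zero subfield_one by blast+
next
  fix x y assume "x \<in> adjoin L c" "y \<in> adjoin L c"
  then obtain a1 b1 a2 b2 where 1: "a1 \<in> polys_over L" "b1 \<in> polys_over L" "poly b1 c \<noteq> 0" "x = poly a1 c / poly b1 c"
    and 2: "a2 \<in> polys_over L" "b2 \<in> polys_over L" "poly b2 c \<noteq> 0" "y = poly a2 c / poly b2 c"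
    by (metis adjoinE)
  have "x + y = poly (a1 * b2 + a2 * b1) c / poly (b1 * b2) c"
    unfolding 1(4) 2(4) using 1(3) 2(3) by (simp add: field_simps)
  then show "x + y \<in> adjoin L c"
    using adjoinI[OF polys_over_add[OF L polys_over_mult[OF L 1(1) 2(2)] polys_over_mult[OF L 2(1) 1(2)]]
        polys_over_mult[OF L 1(2) 2(2)]] 1(3) 2(3)
    by simp
  have "x * y = poly (a1 * a2) c / poly (b1 * b2) c" using 1 2 by simp
  then show "x * y \<in> adjoin L c"
    using adjoinI[OF polys_over_mult[OF L 1(1) 2(1)] polys_over_mult[OF L 1(2) 2(2)]] 1(3) 2(3)
    by simp
next
  fix x assume "x \<in> adjoin L c"
  then obtain a b where ab: "a \<in> polys_over L" "b \<in> polys_over L" "poly b c \<noteq> 0" "x = poly a c / poly b c"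
    by (metis adjoinE)
  have "- x = poly (- a) c / poly b c" using ab by simp
  then show "- x \<in> adjoin L c" using adjoinI[OF polys_over_uminus[OF L ab(1)] ab(2,3)] by simp
  assume "x \<noteq> 0"
  then have "inverse x = poly b c / poly a c" using ab by simp
  then show "inverse x \<in> adjoin L c" using ab \<open>x \<noteq> 0\<close> by (simp add: adjoinI)
qed

section \<open>Hensel's lemma and lifting of residues\<close>

context valued_field
begin

lemma unit_subfield_val_eq_0:
  assumes "unit_subfield w L" "x \<in> L" "x \<noteq> 0" shows "w x = 0"
proof -
  have "inverse x \<in> val_ring w" "x \<in> val_ring w"
    using assms subfield_inverse by (auto simp: unit_subfield_def)
  then show ?thesis using assms(3) val_inverse[of x] by (simp add: val_ring_def)
qed

lemma integral_poly_pderiv: "p \<in> polys_over (val_ring w) \<Longrightarrow> pderiv p \<in> polys_over (val_ring w)"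
  using val_ge_mult[OF val_ge_of_nat, of 0 "coeff p (Suc n)" "Suc n" for n]
  by (auto simp: polys_over_def coeff_pderiv val_ring_iff_val_ge simp del: of_nat_Suc)

lemma poly_val_ring: "p \<in> polys_over (val_ring w) \<Longrightarrow> x \<in> val_ring w \<Longrightarrow> poly p x \<in> val_ring w"
proof (induction p)
  case (pCons a p)
  then show ?case by (simp add: val_ring_closed)
qed (simp add: val_ring_def)

lemma poly_taylor1:
  "p \<in> polys_over (val_ring w) \<Longrightarrow> x \<in> val_ring w \<Longrightarrow> h \<in> val_ring w \<Longrightarrow>
   \<exists>D\<in>val_ring w. poly p (x + h) = poly p x + h * D"
proof (induction p)
  case (pCons a q)
  then obtain D where D: "D \<in> val_ring w" "poly q (x + h) = poly q x + h * D" by auto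
  have "poly q x + (x + h) * D \<in> val_ring w"
    using pCons.prems D(1) poly_val_ring by (auto intro: val_ring_closed)
  moreover have "poly (pCons a q) (x + h) = poly (pCons a q) x + h * (poly q x + (x + h) * D)"
    using D(2) by (simp add: algebra_simps)
  ultimately show ?case by blast
qed (auto simp: val_ring_def)

lemma poly_taylor2:
  "p \<in> polys_over (val_ring w) \<Longrightarrow> x \<in> val_ring w \<Longrightarrow> h \<in> val_ring w \<Longrightarrow>
   \<exists>S\<in>val_ring w. poly p (x + h) = poly p x + h * poly (pderiv p) x + h\<^sup>2 * S"
proof (induction p)
  case (pCons a q)
  then obtain S where S: "S \<in> val_ring w" "poly q (x + h) = poly q x + h * poly (pderiv q) x + h\<^sup>2 * S"
    by auto
  have "poly (pderiv q) x \<in> val_ring w"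
    using pCons.prems poly_val_ring integral_poly_pderiv by simp
  then have "x * S + poly (pderiv q) x + h * S \<in> val_ring w"
    using pCons.prems(2,3) S(1) by (simp add: val_ring_closed)
  moreover have "poly (pCons a q) (x + h) =
      poly (pCons a q) x + h * poly (pderiv (pCons a q)) x + h\<^sup>2 * (x * S + poly (pderiv q) x + h * S)"
    using S(2) by (simp add: pderiv_pCons algebra_simps power2_eq_square)
  ultimately show ?case by blast
qed (auto simp: val_ring_def)

lemma poly_val_ge_diff:
  assumes "p \<in> polys_over (val_ring w)" "x \<in> val_ring w" "y \<in> val_ring w" "val_ge w s (y - x)"
  shows "val_ge w s (poly p y - poly p x)"
proof -
  have "y - x \<in> val_ring w" using assms(2,3) by (simp add: val_ring_closed)
  then obtain D where D: "D \<in> val_ring w" "poly p (x + (y - x)) = poly p x + (y - x) * D"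
    using poly_taylor1 assms(1,2) by blast
  have "val_ge w (s + 0) ((y - x) * D)"
    using val_ge_mult[OF assms(4), of 0 D] D(1) by (simp add: val_ring_iff_val_ge)
  then show ?thesis using D(2) by simp
qed

lemma newton_step:
  assumes p: "p \<in> polys_over (val_ring w)" and x: "x \<in> val_ring w"
    and d: "poly (pderiv p) x \<noteq> 0" "w (poly (pderiv p) x) = 0"
    and px: "val_ge w k (poly p x)" and k: "k \<ge> 1"
  defines "x' \<equiv> x - poly p x / poly (pderiv p) x"
  shows "val_ge w k (x' - x)" "x' \<in> val_ring w" "val_ge w (k + 1) (poly p x')"
    "poly (pderiv p) x' \<noteq> 0" "w (poly (pderiv p) x') = 0"
proof -
  define h where "h = x' - x"
  have x': "x' = x + h" by (simp add: h_def)
  show hk: "val_ge w k (x' - x)"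
    using px d by (cases "poly p x = 0") (auto simp: x'_def val_ge_def val_divide val_uminus)
  then have h: "h \<in> val_ring w" using val_ge_mono[OF hk, of 0] k by (simp add: h_def val_ring_iff_val_ge)
  then show "x' \<in> val_ring w" using x x' val_ring_closed by simp
  obtain S where S: "S \<in> val_ring w" "poly p x' = poly p x + h * poly (pderiv p) x + h\<^sup>2 * S"
    using poly_taylor2[OF p x h] x' by blast
  have "poly p x + h * poly (pderiv p) x = 0" using d by (simp add: h_def x'_def)
  then have "poly p x' = (h * h) * S" using S(2) by (simp add: power2_eq_square)
  moreover have "val_ge w ((k + k) + 0) ((h * h) * S)"
    using val_ge_mult[OF val_ge_mult[OF hk hk], of 0 S] S(1) by (simp add: h_def val_ring_iff_val_ge)
  ultimately show "val_ge w (k + 1) (poly p x')" using k by (auto simp: val_ge_def)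
  obtain D where D: "D \<in> val_ring w" "poly (pderiv p) x' = poly (pderiv p) x + h * D"
    using poly_taylor1[OF integral_poly_pderiv[OF p] x h] x' by blast
  have "val_ge w (k + 0) (h * D)"
    using val_ge_mult[OF hk, of 0 D] D(1) by (simp add: h_def val_ring_iff_val_ge)
  then have "val_ge w (w (poly (pderiv p) x) + 1) (h * D)"
    using d k by (auto simp: val_ge_def)
  from val_add_dominant[OF d(1) this] D(2) d(2)
  show "poly (pderiv p) x' \<noteq> 0" "w (poly (pderiv p) x') = 0" by simp_all
qed

lemma val_complete_limit:
  assumes complete: "val_complete w" and step: "\<And>n. val_ge w (int n) (x (Suc n) - x n)"
  shows "\<exists>c. \<forall>K. val_ge w (int K) (c - x K)"
proof -
  have cauchy: "val_ge w (int n) (x m - x n)" if "n \<le> m" for m n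
    using that
  proof (induction m rule: dec_induct)
    case (step m)
    have "x (Suc m) - x n = (x (Suc m) - x m) + (x m - x n)" by simp
    then show ?case using val_ge_add[OF val_ge_mono[OF assms(2)[of m], of n] step.IH] step.hyps by simp
  qed simp
  have "val_close w N (x m) (x n)" if "nat N \<le> m" "nat N \<le> n" for N m n
  proof (cases "n \<le> m")
    case True
    then show ?thesis using val_ge_mono[OF cauchy[OF True], of N] that(2)
      by (simp add: val_close_iff_val_ge)
  next
    case False
    then show ?thesis using val_ge_mono[OF cauchy[of m n], of N] that(1)
      by (simp add: val_close_iff_val_ge val_ge_diff_commute)
  qed
  then obtain c where c: "\<And>N. \<exists>M. \<forall>n\<ge>M. val_close w N (x n) c"
    using complete unfolding val_complete_def by blast
  have "val_ge w (int K) (c - x K)" for K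
  proof -
    obtain M where "val_close w (int K) (x (max M K)) c" using c by (meson max.cobounded1)
    then have "val_ge w (int K) (x (max M K) - c)" by (simp add: val_close_iff_val_ge)
    from val_ge_diff[OF cauchy[of K "max M K"] this] show ?thesis by simp
  qed
  then show ?thesis by blast
qed

lemma hensel_lift:
  assumes complete: "val_complete w" and p: "p \<in> polys_over (val_ring w)" and u: "u \<in> val_ring w"
    and pu: "val_ge w 1 (poly p u)"
    and du: "poly (pderiv p) u \<noteq> 0" "w (poly (pderiv p) u) = 0"
  shows "\<exists>c. val_ge w 1 (c - u) \<and> poly p c = 0"
proof -
  define x where "x k = ((\<lambda>y. y - poly p y / poly (pderiv p) y) ^^ k) u" for k
  have x_Suc: "x (Suc k) = x k - poly p (x k) / poly (pderiv p) (x k)" for k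
    by (simp add: x_def)
  have inv: "x k \<in> val_ring w \<and> val_ge w 1 (x k - u) \<and> poly (pderiv p) (x k) \<noteq> 0 \<and>
      w (poly (pderiv p) (x k)) = 0 \<and> val_ge w (int k + 1) (poly p (x k))" for k
  proof (induction k)
    case (Suc k)
    then have "x k \<in> val_ring w" "val_ge w 1 (x k - u)" "poly (pderiv p) (x k) \<noteq> 0"
      "w (poly (pderiv p) (x k)) = 0" "val_ge w (int k + 1) (poly p (x k))" by auto
    note N = newton_step[OF p this(1,3,4,5), folded x_Suc, simplified]
    have "x (Suc k) - u = (x (Suc k) - x k) + (x k - u)" by simp
    then have "val_ge w 1 (x (Suc k) - u)"
      using val_ge_add[OF val_ge_mono[OF N(1), of 1] \<open>val_ge w 1 (x k - u)\<close>] by simp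
    then show ?case using N(2-5) by (simp add: add.commute)
  qed (simp add: x_def u pu du)
  have "val_ge w (int n) (x (Suc n) - x n)" for n
    using val_ge_mono[OF newton_step(1)[OF p, of "x n" "int n + 1"], of n] inv[of n] by (simp add: x_Suc)
  then obtain c where c: "\<And>K. val_ge w (int K) (c - x K)"
    using val_complete_limit[OF complete] by blast
  have "c \<in> val_ring w"
    using val_ge_add[OF c[of 0, simplified] inv[of 0, THEN conjunct1, unfolded val_ring_iff_val_ge]]
    by (simp add: val_ring_iff_val_ge)
  have "val_ge w (int K) (poly p c)" for K
  proof -
    have "val_ge w (int K) (poly p c - poly p (x K))"
      using poly_val_ge_diff[OF p _ \<open>c \<in> val_ring w\<close> c] inv by blast
    moreover have "val_ge w (int K) (poly p (x K))" using inv[of K] val_ge_mono[of w "int K + 1" "poly p (x K)" "int K"] by simp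
    ultimately show ?thesis using val_ge_add by fastforce
  qed
  then have "poly p c = 0" by (rule val_ge_all_imp_zero)
  moreover have "val_ge w 1 (c - u)"
    using val_ge_add[OF c[of 1, simplified] inv[of 1, THEN conjunct2, THEN conjunct1]] by simp
  ultimately show ?thesis by blast
qed

lemma adjoin_unit_subfield:
  assumes L: "unit_subfield w L"
    and units: "\<And>q. q \<in> polys_over L \<Longrightarrow> poly q c \<noteq> 0 \<Longrightarrow> w (poly q c) = 0"
  shows "unit_subfield w (adjoin L c)"
proof -
  have "x \<in> val_ring w" if "x \<in> adjoin L c" for x
  proof -
    obtain a b where "a \<in> polys_over L" "b \<in> polys_over L" "poly b c \<noteq> 0" "x = poly a c / poly b c"
      using \<open>x \<in> adjoin L c\<close> by (rule adjoinE)
    then show ?thesis using units by (cases "poly a c = 0") (auto simp: val_ring_def val_divide)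
  qed
  then show ?thesis using L adjoin_subfield by (auto simp: unit_subfield_def)
qed

lemma minimal_poly_hensel_root:
  assumes complete: "val_complete w" and char: "\<And>n. n > 0 \<Longrightarrow> of_nat n \<noteq> (0::'f)"
    and L: "unit_subfield w L" and u: "u \<in> val_ring w"
    and p: "p \<in> polys_over L" "p \<noteq> 0" "val_ge w 1 (poly p u)"
    and min: "\<And>q. q \<in> polys_over L \<Longrightarrow> q \<noteq> 0 \<Longrightarrow> degree q < degree p \<Longrightarrow>
      poly q u \<noteq> 0 \<and> w (poly q u) = 0"
  shows "\<exists>c. val_ge w 1 (c - u) \<and> poly p c = 0 \<and>
    (\<forall>q\<in>polys_over L. q \<noteq> 0 \<longrightarrow> degree q < degree p \<longrightarrow> poly q c \<noteq> 0 \<and> w (poly q c) = 0)"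
proof -
  have sub: "is_subfield L" and integral: "polys_over L \<subseteq> polys_over (val_ring w)"
    using L polys_over_mono by (auto simp: unit_subfield_def)
  have "degree p > 0"
  proof (rule ccontr)
    assume "\<not> degree p > 0"
    then obtain a where "p = [:a:]" by (metis degree_eq_zeroE gr0I)
    then show False
      using p unit_subfield_val_eq_0[OF L, of a] by (simp add: val_ge_def)
  qed
  then have "pderiv p \<noteq> 0" "degree (pderiv p) < degree p"
    using pderiv_nonzero_degree_less char by auto
  then have "poly (pderiv p) u \<noteq> 0" "w (poly (pderiv p) u) = 0"
    using min polys_over_pderiv[OF sub p(1)] by auto
  then obtain c where c: "val_ge w 1 (c - u)" "poly p c = 0"
    using hensel_lift[OF complete _ u p(3)] p(1) integral by blast
  have "c \<in> val_ring w"
    using val_ge_add[OF val_ge_mono[OF c(1), of 0], of u] u by (simp add: val_ring_iff_val_ge)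
  have "poly q c \<noteq> 0 \<and> w (poly q c) = 0"
    if q: "q \<in> polys_over L" "q \<noteq> 0" "degree q < degree p" for q
  proof -
    have "val_ge w 1 (poly q c - poly q u)"
      using poly_val_ge_diff[OF _ u \<open>c \<in> val_ring w\<close> c(1)] q(1) integral by blast
    then show ?thesis using val_eq_of_close[of "poly q u" "poly q c"] min[OF q] by simp
  qed
  then show ?thesis using c by blast
qed

lemma root_of_minimal_poly_units:
  assumes L: "is_subfield L" and p: "p \<in> polys_over L" "p \<noteq> 0" "poly p c = 0"
    and units: "\<And>q. q \<in> polys_over L \<Longrightarrow> q \<noteq> 0 \<Longrightarrow> degree q < degree p \<Longrightarrow>
      poly q c \<noteq> 0 \<and> w (poly q c) = 0"
    and q: "q \<in> polys_over L" "poly q c \<noteq> 0"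
  shows "w (poly q c) = 0"
proof -
  obtain r where r: "r \<in> polys_over L" "r = 0 \<or> degree r < degree p" "p dvd q - r"
    using polys_over_reduce[OF L p(1,2) q(1)] by blast
  then obtain k where "q - r = p * k" by (elim dvdE)
  then have "poly q c - poly r c = poly p c * poly k c" by (metis poly_diff poly_mult)
  then have "poly r c = poly q c" using p(3) by simp
  then show ?thesis using units[OF r(1)] r(2) q(2) by (cases "r = 0") auto
qed

lemma exists_residue_lift:
  assumes complete: "val_complete w" and char: "\<And>n. n > 0 \<Longrightarrow> of_nat n \<noteq> (0::'f)"
    and L: "unit_subfield w L" and u: "u \<noteq> 0" "w u = 0"
  shows "\<exists>L'. unit_subfield w L' \<and> L \<subseteq> L' \<and> (\<exists>c\<in>L'. val_ge w 1 (u - c))"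
proof -
  have sub: "is_subfield L" and integral: "polys_over L \<subseteq> polys_over (val_ring w)"
    using L polys_over_mono by (auto simp: unit_subfield_def)
  have u_int: "u \<in> val_ring w" using u by (simp add: val_ring_def)
  have lift: "\<exists>L'. unit_subfield w L' \<and> L \<subseteq> L' \<and> (\<exists>c\<in>L'. val_ge w 1 (u - c))"
    if "val_ge w 1 (u - c)" and units: "\<And>q. q \<in> polys_over L \<Longrightarrow> poly q c \<noteq> 0 \<Longrightarrow> w (poly q c) = 0"
    for c
    using that adjoin_unit_subfield[OF L units] subset_adjoin[OF sub] mem_adjoin[OF sub] by blast
  show ?thesis
  proof (cases "\<forall>q\<in>polys_over L. poly q u \<noteq> 0 \<longrightarrow> w (poly q u) = 0")
    case True
    then show ?thesis using lift[of u] by simp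
  next
    case False
    define Bad where "Bad = {p \<in> polys_over L. p \<noteq> 0 \<and> val_ge w 1 (poly p u)}"
    have int_val: "poly q u \<in> val_ring w" if "q \<in> polys_over L" for q
      using poly_val_ring u_int integral that by blast
    have Bad_iff: "q \<in> Bad \<longleftrightarrow> \<not> (poly q u \<noteq> 0 \<and> w (poly q u) = 0)"
      if "q \<in> polys_over L" "q \<noteq> 0" for q
      using that int_val[OF that(1)] by (auto simp: Bad_def val_ge_def val_ring_def)
    from False obtain q where q: "q \<in> polys_over L" "poly q u \<noteq> 0" "w (poly q u) \<noteq> 0"
      by blast
    then have "q \<in> Bad" using Bad_iff[of q] by (cases "q = 0") auto
    then obtain p where p: "p \<in> Bad" and p_min: "\<And>q. q \<in> Bad \<Longrightarrow> degree p \<le> degree q"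
      using ex_has_least_nat[of "\<lambda>q. q \<in> Bad" q degree] by blast
    then have p': "p \<in> polys_over L" "p \<noteq> 0" "val_ge w 1 (poly p u)" by (auto simp: Bad_def)
    have "poly q u \<noteq> 0 \<and> w (poly q u) = 0"
      if "q \<in> polys_over L" "q \<noteq> 0" "degree q < degree p" for q
      using Bad_iff[OF that(1,2)] p_min[of q] that(3) by auto
    then obtain c where c: "val_ge w 1 (c - u)" "poly p c = 0"
      and units: "\<And>q. q \<in> polys_over L \<Longrightarrow> q \<noteq> 0 \<Longrightarrow> degree q < degree p \<Longrightarrow>
        poly q c \<noteq> 0 \<and> w (poly q c) = 0"
      using minimal_poly_hensel_root[OF complete char L u_int p'] by blast
    then show ?thesis
      using lift[OF val_ge_diff_commute[THEN iffD1, OF c(1)] root_of_minimal_poly_units[OF sub p'(1,2) c(2) units]]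
      by blast
  qed
qed

lemma exists_residue_lifts:
  assumes complete: "val_complete w" and char: "\<And>n. n > 0 \<Longrightarrow> of_nat n \<noteq> (0::'f)"
    and L: "unit_subfield w L" and "finite S" and u: "\<And>j. j \<in> S \<Longrightarrow> u j \<noteq> 0 \<and> w (u j) = 0"
  shows "\<exists>L' c. unit_subfield w L' \<and> L \<subseteq> L' \<and> (\<forall>j\<in>S. c j \<in> L' \<and> val_ge w 1 (u j - c j))"
  using \<open>finite S\<close> u
proof (induction S rule: finite_induct)
  case empty
  then show ?case using L by blast
next
  case (insert j S)
  then obtain L1 c where L1: "unit_subfield w L1" "L \<subseteq> L1" "\<forall>k\<in>S. c k \<in> L1 \<and> val_ge w 1 (u k - c k)"
    by auto
  obtain L2 cj where "unit_subfield w L2" "L1 \<subseteq> L2" "cj \<in> L2" "val_ge w 1 (u j - cj)"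
    using exists_residue_lift[OF complete char L1(1)] insert.prems by blast
  then show ?case using L1 by (intro exI[of _ L2] exI[of _ "c(j := cj)"]) auto
qed

end

section \<open>Formal order with respect to a system of variables\<close>

text \<open>formal_order_ge w L Y s z: z is a polynomial expression in the Y_j with coefficients in L
  each of whose monomials has weight at least s, the weight of Y_j being w (Y_j).\<close>
inductive formal_order_ge :: "('f::field \<Rightarrow> int) \<Rightarrow> 'f set \<Rightarrow> ('n \<Rightarrow> 'f) \<Rightarrow> int \<Rightarrow> 'f \<Rightarrow> bool"
  for w L Y where
  const: "l \<in> L \<Longrightarrow> s \<le> 0 \<Longrightarrow> formal_order_ge w L Y s l"
| zero: "formal_order_ge w L Y s 0"
| var: "Y j \<noteq> 0 \<Longrightarrow> s \<le> w (Y j) \<Longrightarrow> formal_order_ge w L Y s (Y j)"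
| add: "formal_order_ge w L Y s a \<Longrightarrow> formal_order_ge w L Y s b \<Longrightarrow> formal_order_ge w L Y s (a + b)"
| mult: "formal_order_ge w L Y s a \<Longrightarrow> formal_order_ge w L Y t b \<Longrightarrow> r \<le> s + t \<Longrightarrow>
    formal_order_ge w L Y r (a * b)"

lemma formal_order_ge_mono: "formal_order_ge w L Y s z \<Longrightarrow> r \<le> s \<Longrightarrow> formal_order_ge w L Y r z"
proof (induction arbitrary: r rule: formal_order_ge.induct)
  case (mult s a t b r')
  then show ?case by (intro formal_order_ge.mult[of _ _ _ s a t b]) auto
qed (auto intro: formal_order_ge.intros)

lemma formal_order_ge_scale: "l \<in> L \<Longrightarrow> formal_order_ge w L Y s a \<Longrightarrow> formal_order_ge w L Y s (l * a)"
  using formal_order_ge.mult[OF formal_order_ge.const, of l L 0 w Y s a s] by simp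

lemma formal_order_ge_power:
  "1 \<in> L \<Longrightarrow> formal_order_ge w L Y g y \<Longrightarrow> formal_order_ge w L Y (int e * g) (y ^ e)"
proof (induction e)
  case 0 then show ?case by (simp add: formal_order_ge.const)
next
  case (Suc e)
  have "formal_order_ge w L Y (g + int e * g) (y * y ^ e)"
    using Suc by (intro formal_order_ge.mult[of _ _ _ g y "int e * g"]) auto
  then show ?case by (simp add: algebra_simps)
qed

lemma formal_order_ge_sum:
  "(\<And>i. i \<in> S \<Longrightarrow> formal_order_ge w L Y s (f i)) \<Longrightarrow> formal_order_ge w L Y s (\<Sum>i\<in>S. f i)"
  by (induction S rule: infinite_finite_induct) (auto intro: formal_order_ge.add formal_order_ge.zero)

lemma formal_order_ge_transfer:
  assumes "L \<subseteq> L'" and vars: "\<And>j. Y j \<noteq> 0 \<Longrightarrow> formal_order_ge w L' Y' (w (Y j)) (Y j)"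
  shows "formal_order_ge w L Y s z \<Longrightarrow> formal_order_ge w L' Y' s z"
proof (induction rule: formal_order_ge.induct)
  case (var j s)
  then show ?case using formal_order_ge_mono[OF vars] by blast
qed (use assms(1) in \<open>auto intro: formal_order_ge.intros\<close>)

context valued_field
begin

lemma formal_order_ge_val_ge:
  assumes "L \<subseteq> val_ring w" shows "formal_order_ge w L Y s z \<Longrightarrow> val_ge w s z"
proof (induction rule: formal_order_ge.induct)
  case (const l s)
  then show ?case using assms by (auto simp: val_ring_def val_ge_def)
next
  case (mult s a t b r)
  then show ?case using val_ge_mult val_ge_mono by blast
next
  case (add s a b)
  then show ?case using val_ge_add by blast
qed (auto simp: val_ge_def)

lemma formal_order_ge_le_val:
  assumes "L \<subseteq> val_ring w" "formal_order_ge w L Y s z" "z \<noteq> 0" shows "s \<le> w z"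
  using formal_order_ge_val_ge[OF assms(1,2)] assms(3) by (simp add: val_ge_def)

lemma formal_order_ge_monoidal:
  assumes "i \<noteq> j" "Y i \<noteq> 0" "Y j \<noteq> 0" "w (Y i) < w (Y j)"
  shows "formal_order_ge w L Y s z \<Longrightarrow> formal_order_ge w L (Y(j := Y j / Y i)) s z"
proof (rule formal_order_ge_transfer[of L L])
  fix k assume k: "Y k \<noteq> 0"
  let ?Y' = "Y(j := Y j / Y i)"
  show "formal_order_ge w L ?Y' (w (Y k)) (Y k)"
  proof (cases "k = j")
    case False
    then show ?thesis using formal_order_ge.var[of ?Y' k "w (Y k)"] k by simp
  next
    case True
    have "formal_order_ge w L ?Y' (w (Y i)) (?Y' i)"
      using assms by (intro formal_order_ge.var) auto
    moreover have "formal_order_ge w L ?Y' (w (Y j) - w (Y i)) (?Y' j)"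
      using assms by (intro formal_order_ge.var) (auto simp: val_divide)
    ultimately have "formal_order_ge w L ?Y' (w (Y j)) (?Y' i * ?Y' j)"
      by (rule formal_order_ge.mult) simp
    then show ?thesis using True assms by simp
  qed
qed simp

end

definition has_leading_monomial ::
  "('f::field \<Rightarrow> int) \<Rightarrow> 'f set \<Rightarrow> ('n \<Rightarrow> 'f) \<Rightarrow> 'f \<Rightarrow> int \<Rightarrow> int \<Rightarrow> 'f \<Rightarrow> bool" where
  "has_leading_monomial w L Y y g s z \<longleftrightarrow>
     (\<exists>l\<in>L. \<exists>e. (l = 0 \<or> int e * g = s) \<and> formal_order_ge w L Y (s + 1) (z - l * y ^ e))"

lemma formal_order_ge_monomial:
  assumes "1 \<in> L" "formal_order_ge w L Y g y" "l \<in> L" "l = 0 \<or> int e * g = s"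
  shows "formal_order_ge w L Y s (l * y ^ e)"
  using assms formal_order_ge_scale[OF _ formal_order_ge_power] formal_order_ge.zero by fastforce

lemma has_leading_monomial_of_order:
  "0 \<in> L \<Longrightarrow> formal_order_ge w L Y (s + 1) z \<Longrightarrow> has_leading_monomial w L Y y g s z"
  unfolding has_leading_monomial_def by force

lemma formal_order_ge_of_leading:
  assumes "1 \<in> L" "formal_order_ge w L Y g y" "has_leading_monomial w L Y y g s z"
  shows "formal_order_ge w L Y s z"
proof -
  obtain l e where l: "l \<in> L" "l = 0 \<or> int e * g = s" "formal_order_ge w L Y (s + 1) (z - l * y ^ e)"
    using assms(3) unfolding has_leading_monomial_def by blast
  have "formal_order_ge w L Y s ((z - l * y ^ e) + l * y ^ e)"
    using formal_order_ge_mono[OF l(3)] formal_order_ge_monomial[OF assms(1,2) l(1,2)]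
    by (intro formal_order_ge.add) auto
  then show ?thesis by simp
qed

lemma has_leading_monomial_add:
  assumes L: "is_subfield L" and g: "g > 0"
    and a: "has_leading_monomial w L Y y g s a" and b: "has_leading_monomial w L Y y g s b"
  shows "has_leading_monomial w L Y y g s (a + b)"
proof -
  obtain la ea lb eb where
    a': "la \<in> L" "la = 0 \<or> int ea * g = s" "formal_order_ge w L Y (s + 1) (a - la * y ^ ea)" and
    b': "lb \<in> L" "lb = 0 \<or> int eb * g = s" "formal_order_ge w L Y (s + 1) (b - lb * y ^ eb)"
    using a b unfolding has_leading_monomial_def by blast
  \<comment> \<open>both monomials have weight s, so they are multiples of the same power of y\<close>
  define e where "e = (if la = 0 then eb else ea)"
  have ea: "la * y ^ e = la * y ^ ea" and eb: "lb * y ^ e = lb * y ^ eb"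
    using a'(2) b'(2) g by (auto simp: e_def)
  have "(a + b) - (la + lb) * y ^ e = (a - la * y ^ e) + (b - lb * y ^ e)"
    by (simp add: algebra_simps)
  also have "\<dots> = (a - la * y ^ ea) + (b - lb * y ^ eb)"
    by (simp only: ea eb)
  finally have "(a + b) - (la + lb) * y ^ e = (a - la * y ^ ea) + (b - lb * y ^ eb)" .
  moreover have "la + lb = 0 \<or> int e * g = s" using a'(2) b'(2) by (auto simp: e_def)
  ultimately show ?thesis
    using a' b' subfield_add[OF L] formal_order_ge.add unfolding has_leading_monomial_def by metis
qed

lemma has_leading_monomial_mult:
  assumes L: "is_subfield L" and y: "formal_order_ge w L Y g y"
    and a: "has_leading_monomial w L Y y g s a" and b: "has_leading_monomial w L Y y g t b"
  shows "has_leading_monomial w L Y y g (s + t) (a * b)"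
proof -
  obtain la ea lb eb where
    a': "la \<in> L" "la = 0 \<or> int ea * g = s" "formal_order_ge w L Y (s + 1) (a - la * y ^ ea)" and
    b': "lb \<in> L" "lb = 0 \<or> int eb * g = t" "formal_order_ge w L Y (t + 1) (b - lb * y ^ eb)"
    using a b unfolding has_leading_monomial_def by blast
  define ra rb where "ra = a - la * y ^ ea" and "rb = b - lb * y ^ eb"
  have ma: "formal_order_ge w L Y s (la * y ^ ea)" and mb: "formal_order_ge w L Y t (lb * y ^ eb)"
    using formal_order_ge_monomial[OF subfield_one[OF L] y] a' b' by auto
  have "a * b - (la * lb) * y ^ (ea + eb) = (la * y ^ ea) * rb + ra * (lb * y ^ eb) + ra * rb"
    by (simp add: ra_def rb_def algebra_simps power_add)
  moreover have "formal_order_ge w L Y (s + t + 1) ((la * y ^ ea) * rb + ra * (lb * y ^ eb) + ra * rb)"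
    using formal_order_ge.mult[OF ma b'(3)[folded rb_def], of "s + t + 1"]
      formal_order_ge.mult[OF a'(3)[folded ra_def] mb, of "s + t + 1"]
      formal_order_ge.mult[OF a'(3)[folded ra_def] b'(3)[folded rb_def], of "s + t + 1"]
    by (intro formal_order_ge.add) auto
  moreover have "la * lb = 0 \<or> int (ea + eb) * g = s + t" using a'(2) b'(2) by (auto simp: algebra_simps)
  ultimately show ?thesis
    using subfield_mult[OF L a'(1) b'(1)] unfolding has_leading_monomial_def by metis
qed

locale coord_change = valued_field w for w :: "'f::field \<Rightarrow> int" +
  fixes L L' :: "'f set" and g :: int and Y Y' :: "'n \<Rightarrow> 'f" and i0 :: 'n and c :: "'n \<Rightarrow> 'f"
  assumes subset: "L \<subseteq> L'" and L'_unit: "unit_subfield w L'" and g_pos: "g > 0"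
    and vals: "\<And>j. Y j \<noteq> 0 \<Longrightarrow> w (Y j) = g" and pivot: "Y i0 \<noteq> 0" "Y' i0 = Y i0"
    and coord: "\<And>j. j \<noteq> i0 \<Longrightarrow> c j \<in> L' \<and> Y j = Y' j + c j * Y i0"
    and raised: "\<And>j. j \<noteq> i0 \<Longrightarrow> val_ge w (g + 1) (Y' j)"
begin

lemma L'_subfield: "is_subfield L'"
  using L'_unit by (simp add: unit_subfield_def)

lemma zero_one_mem_L': "0 \<in> L'" "1 \<in> L'"
  using L'_subfield subfield_zero subfield_one by auto

lemma pivot_order: "formal_order_ge w L' Y' g (Y i0)"
  using formal_order_ge.var[of Y' i0 g] pivot vals by simp

lemma new_var_order: "j \<noteq> i0 \<Longrightarrow> formal_order_ge w L' Y' (g + 1) (Y' j)"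
  using raised formal_order_ge.var[of Y' j "g + 1"] formal_order_ge.zero[of w L' Y' "g + 1"]
  by (cases "Y' j = 0") (auto simp: val_ge_def)

lemma old_var_order: "Y j \<noteq> 0 \<Longrightarrow> formal_order_ge w L' Y' g (Y j)"
proof (cases "j = i0")
  case False
  have "formal_order_ge w L' Y' g (Y' j + c j * Y i0)"
    using formal_order_ge_mono[OF new_var_order[OF False], of g] coord[OF False] pivot_order
    by (intro formal_order_ge.add formal_order_ge_scale) auto
  then show ?thesis using coord[OF False] by simp
qed (use pivot_order in simp)

lemma has_leading_monomial_var:
  assumes "Y j \<noteq> 0" "s \<le> w (Y j)"
  shows "has_leading_monomial w L' Y' (Y i0) g s (Y j)"
proof (cases "s = g")
  case False
  then have "s + 1 \<le> g" using assms vals by force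
  then show ?thesis using zero_one_mem_L' formal_order_ge_mono[OF old_var_order[OF assms(1)]]
    by (intro has_leading_monomial_of_order) auto
next
  case True
  show ?thesis
  proof (cases "j = i0")
    case True
    then show ?thesis using zero_one_mem_L' \<open>s = g\<close> formal_order_ge.zero
      unfolding has_leading_monomial_def by (intro bexI[of _ 1] exI[of _ 1]) auto
  next
    case False
    then show ?thesis using coord[OF False] new_var_order[OF False] \<open>s = g\<close>
      unfolding has_leading_monomial_def by (intro bexI[of _ "c j"] exI[of _ 1]) auto
  qed
qed

lemma has_leading_monomial:
  "formal_order_ge w L Y s z \<Longrightarrow> has_leading_monomial w L' Y' (Y i0) g s z"
proof (induction rule: formal_order_ge.induct)
  case (const l s)
  show ?case
  proof (cases "s = 0")
    case True
    then show ?thesis using const subset formal_order_ge.zero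
      unfolding has_leading_monomial_def by (intro bexI[of _ l] exI[of _ 0]) auto
  next
    case False
    then show ?thesis using const subset zero_one_mem_L'
      by (intro has_leading_monomial_of_order formal_order_ge.const) auto
  qed
next
  case (zero s)
  show ?case using zero_one_mem_L' by (intro has_leading_monomial_of_order formal_order_ge.zero)
next
  case (var j s)
  then show ?case by (rule has_leading_monomial_var)
next
  case (add s a b)
  then show ?case using has_leading_monomial_add[OF L'_subfield g_pos] by blast
next
  case (mult s a t b r)
  then have ab: "has_leading_monomial w L' Y' (Y i0) g (s + t) (a * b)"
    using has_leading_monomial_mult[OF L'_subfield pivot_order] by blast
  show ?case
  proof (cases "r = s + t")
    case False
    then have "formal_order_ge w L' Y' (r + 1) (a * b)"
      using formal_order_ge_of_leading[OF zero_one_mem_L'(2) pivot_order ab] formal_order_ge_mono mult.hyps(3)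
      by force
    then show ?thesis using has_leading_monomial_of_order zero_one_mem_L'(1) by blast
  qed (use ab in simp)
qed

lemma formal_order_preserved: "formal_order_ge w L Y s z \<Longrightarrow> formal_order_ge w L' Y' s z"
  using formal_order_ge_of_leading[OF zero_one_mem_L'(2) pivot_order] has_leading_monomial by blast

lemma formal_order_raised:
  assumes z: "formal_order_ge w L Y s z" "z \<noteq> 0" "\<not> g dvd w z"
  shows "formal_order_ge w L' Y' (s + 1) z"
proof -
  obtain l e where l: "l \<in> L'" "l = 0 \<or> int e * g = s" "formal_order_ge w L' Y' (s + 1) (z - l * Y i0 ^ e)"
    using has_leading_monomial[OF z(1)] unfolding has_leading_monomial_def by blast
  show ?thesis
  proof (cases "l = 0")
    case False
    \<comment> \<open>otherwise the monomial l Y_i0^e of value s = e g would dominate z\<close>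
    have m: "l * Y i0 ^ e \<noteq> 0" "w (l * Y i0 ^ e) = s"
      using False l(2) pivot vals[OF pivot(1)] val_mult val_power unit_subfield_val_eq_0[OF L'_unit l(1) False]
      by auto
    have "val_ge w (w (l * Y i0 ^ e) + 1) (z - l * Y i0 ^ e)"
      using formal_order_ge_val_ge[OF _ l(3)] L'_unit m(2) by (simp add: unit_subfield_def)
    then have "w z = int e * g" using val_add_dominant[OF m(1)] m(2) l(2) False by fastforce
    then show ?thesis using z(3) by simp
  qed (use l(3) in simp)
qed

end

section \<open>Reaching a variable of value one\<close>

lemma not_dvd_consecutive:
  fixes g a :: int
  assumes "g > 1" shows "\<not> (g dvd a + 1 \<and> g dvd a)"
  using assms dvd_add_right_iff[of g a 1] by (auto simp: zdvd1_eq)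

context valued_field
begin

lemma monoidal_equalize_values:
  fixes Y :: "'n::finite \<Rightarrow> 'f" and \<iota> :: "('n, 'k::comm_ring_1) mps \<Rightarrow> 'f"
  assumes "\<forall>j. Y j \<noteq> 0 \<longrightarrow> 1 \<le> w (Y j)" "Y i1 \<noteq> 0"
  shows "\<exists>Y'. (transf_step \<iota> w)\<^sup>*\<^sup>* Y Y' \<and> (\<forall>L s z. formal_order_ge w L Y s z \<longrightarrow> formal_order_ge w L Y' s z) \<and>
    (\<forall>j. Y' j \<noteq> 0 \<longrightarrow> 1 \<le> w (Y' j)) \<and> (\<exists>i. Y' i \<noteq> 0 \<and> (\<forall>j. Y' j \<noteq> 0 \<longrightarrow> w (Y' j) = w (Y' i)))"
  using assms
proof (induction "\<Sum>j\<in>UNIV. if Y j = 0 then 0 else nat (w (Y j))" arbitrary: Y i1 rule: less_induct)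
  case less
  obtain i where i: "Y i \<noteq> 0" and i_min: "\<And>j. Y j \<noteq> 0 \<Longrightarrow> nat (w (Y i)) \<le> nat (w (Y j))"
    using ex_has_least_nat[of "\<lambda>j. Y j \<noteq> 0" i1 "\<lambda>j. nat (w (Y j))"] less.prems(2) by blast
  show ?case
  proof (cases "\<forall>j. Y j \<noteq> 0 \<longrightarrow> w (Y j) = w (Y i)")
    case True
    then show ?thesis using less.prems i by blast
  next
    case False
    then obtain j where "Y j \<noteq> 0" "w (Y j) \<noteq> w (Y i)" by blast
    moreover have "w (Y i) \<le> w (Y j)"
      using i_min[OF \<open>Y j \<noteq> 0\<close>] less.prems(1) i \<open>Y j \<noteq> 0\<close> by force
    ultimately have j: "Y j \<noteq> 0" "w (Y i) < w (Y j)" by auto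
    then have "i \<noteq> j" by auto
    \<comment> \<open>one step of the Euclidean algorithm on the values\<close>
    define Y2 where "Y2 = Y(j := Y j / Y i)"
    have step: "transf_step \<iota> w Y Y2"
      unfolding Y2_def using transf_step.monoidal[OF \<open>i \<noteq> j\<close> i j] .
    have Y2j: "Y2 j \<noteq> 0" "w (Y2 j) = w (Y j) - w (Y i)"
      using i j by (auto simp: Y2_def val_divide)
    have pos: "\<forall>k. Y2 k \<noteq> 0 \<longrightarrow> 1 \<le> w (Y2 k)" using less.prems(1) Y2j j by (auto simp: Y2_def)
    have Y2i: "Y2 i \<noteq> 0" using i \<open>i \<noteq> j\<close> by (simp add: Y2_def)
    have "(\<Sum>k\<in>UNIV. if Y2 k = 0 then 0 else nat (w (Y2 k))) <
        (\<Sum>k\<in>UNIV. if Y k = 0 then 0 else nat (w (Y k)))"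
    proof (rule sum_strict_mono_ex1)
      show "\<exists>k\<in>UNIV. (if Y2 k = 0 then 0 else nat (w (Y2 k))) < (if Y k = 0 then 0 else nat (w (Y k)))"
        using Y2j j less.prems(1) i by (intro bexI[of _ j]) auto
    qed (use Y2j j less.prems(1) i in \<open>auto simp: Y2_def\<close>)
    then obtain Y' where Y': "(transf_step \<iota> w)\<^sup>*\<^sup>* Y2 Y'"
      "\<forall>L s z. formal_order_ge w L Y2 s z \<longrightarrow> formal_order_ge w L Y' s z"
      "\<forall>j. Y' j \<noteq> 0 \<longrightarrow> 1 \<le> w (Y' j)" "\<exists>i. Y' i \<noteq> 0 \<and> (\<forall>j. Y' j \<noteq> 0 \<longrightarrow> w (Y' j) = w (Y' i))"
      using less.hyps[OF _ pos Y2i] by blast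
    moreover have "(transf_step \<iota> w)\<^sup>*\<^sup>* Y Y'" using step Y'(1) by (rule converse_rtranclp_into_rtranclp)
    moreover have "\<forall>L s z. formal_order_ge w L Y s z \<longrightarrow> formal_order_ge w L Y' s z"
      using Y'(2) formal_order_ge_monoidal[OF \<open>i \<noteq> j\<close> i j] unfolding Y2_def by blast
    ultimately show ?thesis by blast
  qed
qed

lemma coord_change_rtranclp:
  assumes L: "coeff_subfield \<iota> w L" and two: "(2::'f) \<noteq> 0" and c: "\<And>j. c j \<in> L"
  shows "(transf_step \<iota> w)\<^sup>*\<^sup>* Y (\<lambda>j. if j = i then Y i else Y j - c j * Y i)"
proof -
  \<comment> \<open>a single change of coordinates needs unit coefficients, so split c = c1 + c2 into units\<close>
  define c1 :: "_ \<Rightarrow> 'f" where "c1 j = (if c j = 1 then 2 else 1)" for j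
  define c2 where "c2 j = c j - c1 j" for j
  have sub: "unit_subfield w L" using L by (simp add: coeff_subfield_iff)
  have L12: "1 \<in> L" "2 \<in> L"
    using sub subfield_one subfield_add[of L 1 1] by (auto simp: unit_subfield_def)
  have "c1 j \<in> L" "c2 j \<in> L" for j
    using L12 c subfield_diff[of L "c j" "c1 j"] sub by (auto simp: c1_def c2_def unit_subfield_def)
  moreover have "c1 j \<noteq> 0" "c2 j \<noteq> 0" for j
  proof -
    have "(1::'f) \<noteq> 2" by (metis add_cancel_left_right one_add_one zero_neq_one)
    then show "c1 j \<noteq> 0" "c2 j \<noteq> 0" using two by (auto simp: c1_def c2_def)
  qed
  ultimately have units: "c1 j \<in> L \<and> c1 j \<noteq> 0 \<and> w (c1 j) = 0" "c2 j \<in> L \<and> c2 j \<noteq> 0 \<and> w (c2 j) = 0" for j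
    using unit_subfield_val_eq_0[OF sub] by auto
  define Y1 where "Y1 = (\<lambda>j. if j = i then Y i else Y j - c1 j * Y i)"
  have "transf_step \<iota> w Y Y1"
    unfolding Y1_def by (rule transf_step.coord_change[OF L]) (use units in blast)
  moreover have "transf_step \<iota> w Y1 (\<lambda>j. if j = i then Y1 i else Y1 j - c2 j * Y1 i)"
    by (rule transf_step.coord_change[OF L]) (use units in blast)
  moreover have "(\<lambda>j. if j = i then Y1 i else Y1 j - c2 j * Y1 i) = (\<lambda>j. if j = i then Y i else Y j - c j * Y i)"
    by (auto simp: Y1_def c2_def algebra_simps)
  ultimately show ?thesis by (simp add: converse_rtranclp_into_rtranclp)
qed

lemma coord_change_raises_order:
  fixes Y :: "'n::finite \<Rightarrow> 'f" and \<iota> :: "('n, 'k::comm_ring_1) mps \<Rightarrow> 'f"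
  assumes complete: "val_complete w" and char: "\<And>n. n > 0 \<Longrightarrow> of_nat n \<noteq> (0::'f)"
    and L: "coeff_subfield \<iota> w L" and g: "g > 0"
    and vals: "\<And>j. Y j \<noteq> 0 \<Longrightarrow> w (Y j) = g" and i0: "Y i0 \<noteq> 0"
  obtains L' Y' where "coeff_subfield \<iota> w L'" "(transf_step \<iota> w)\<^sup>*\<^sup>* Y Y'" "Y' i0 \<noteq> 0"
    "\<forall>j. Y' j \<noteq> 0 \<longrightarrow> 1 \<le> w (Y' j)"
    "\<And>s z. formal_order_ge w L Y s z \<Longrightarrow> formal_order_ge w L' Y' s z"
    "\<And>s z. formal_order_ge w L Y s z \<Longrightarrow> z \<noteq> 0 \<Longrightarrow> \<not> g dvd w z \<Longrightarrow> formal_order_ge w L' Y' (s + 1) z"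
proof -
  have sub: "unit_subfield w L" and const_range: "range (\<lambda>c. \<iota> (ps_const c)) \<subseteq> L"
    using L by (simp_all add: coeff_subfield_iff)
  have "\<exists>L' c. unit_subfield w L' \<and> L \<subseteq> L' \<and>
      (\<forall>j\<in>{j. Y j \<noteq> 0}. c j \<in> L' \<and> val_ge w 1 (Y j / Y i0 - c j))"
    by (rule exists_residue_lifts[OF complete char sub]) (use i0 vals in \<open>auto simp: val_divide\<close>)
  then obtain L' c0 where L': "unit_subfield w L'" "L \<subseteq> L'"
    and c0: "\<And>j. Y j \<noteq> 0 \<Longrightarrow> c0 j \<in> L' \<and> val_ge w 1 (Y j / Y i0 - c0 j)"
    by blast
  have L'_coeff: "coeff_subfield \<iota> w L'" using L' const_range by (auto simp: coeff_subfield_iff)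
  define c where "c j = (if Y j = 0 then 0 else c0 j)" for j
  have c: "c j \<in> L'" for j
    using c0 L' subfield_zero by (auto simp: c_def unit_subfield_def)
  define Y' where "Y' = (\<lambda>j. if j = i0 then Y i0 else Y j - c j * Y i0)"
  have Y'_raised: "val_ge w (g + 1) (Y' j)" if "j \<noteq> i0" for j
  proof (cases "Y j = 0")
    case False
    have "Y' j = (Y j / Y i0 - c0 j) * Y i0" using that False i0 by (simp add: Y'_def c_def algebra_simps)
    moreover have "val_ge w (1 + g) ((Y j / Y i0 - c0 j) * Y i0)"
      using val_ge_mult[OF conjunct2[OF c0[OF False]], of g "Y i0"] vals[OF i0] by (simp add: val_ge_def)
    ultimately show ?thesis by (simp add: add.commute)
  qed (use that in \<open>simp add: Y'_def c_def\<close>)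
  interpret coord_change w L L' g Y Y' i0 c
    using L' g vals i0 c Y'_raised by unfold_locales (auto simp: Y'_def)
  have "(2::'f) \<noteq> 0" using char[of 2] by simp
  then have "(transf_step \<iota> w)\<^sup>*\<^sup>* Y Y'"
    unfolding Y'_def using coord_change_rtranclp[of \<iota> L' c] L'_coeff c by blast
  moreover have "\<forall>j. Y' j \<noteq> 0 \<longrightarrow> 1 \<le> w (Y' j)"
  proof (intro allI impI)
    fix j assume "Y' j \<noteq> 0"
    then show "1 \<le> w (Y' j)"
      using Y'_raised[of j] vals[OF i0] g by (cases "j = i0") (auto simp: Y'_def val_ge_def)
  qed
  moreover have "Y' i0 \<noteq> 0" using pivot by simp
  ultimately show ?thesis using that[OF L'_coeff] formal_order_preserved formal_order_raised by blast
qed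

lemma exists_transf_value_one:
  fixes Y :: "'n::finite \<Rightarrow> 'f" and \<iota> :: "('n, 'k::comm_ring_1) mps \<Rightarrow> 'f"
  assumes complete: "val_complete w" and char: "\<And>n. n > 0 \<Longrightarrow> of_nat n \<noteq> (0::'f)"
    and P: "P \<noteq> 0" and Q: "Q \<noteq> 0" and PQ: "w P = w Q + 1"
    and "coeff_subfield \<iota> w L" "\<forall>j. Y j \<noteq> 0 \<longrightarrow> 1 \<le> w (Y j)" "Y i1 \<noteq> 0"
    and "formal_order_ge w L Y sP P" "formal_order_ge w L Y sQ Q"
  shows "\<exists>Y'. (transf_step \<iota> w)\<^sup>*\<^sup>* Y Y' \<and> (\<exists>i. Y' i \<noteq> 0 \<and> w (Y' i) = 1)"
  using assms(6-)
proof (induction "nat (w P - sP) + nat (w Q - sQ)" arbitrary: Y L sP sQ i1 rule: less_induct)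
  case less
  obtain Y1 where Y1: "(transf_step \<iota> w)\<^sup>*\<^sup>* Y Y1" "\<forall>L s z. formal_order_ge w L Y s z \<longrightarrow> formal_order_ge w L Y1 s z"
    "\<forall>j. Y1 j \<noteq> 0 \<longrightarrow> 1 \<le> w (Y1 j)" "\<exists>i. Y1 i \<noteq> 0 \<and> (\<forall>j. Y1 j \<noteq> 0 \<longrightarrow> w (Y1 j) = w (Y1 i))"
    using monoidal_equalize_values[OF less.prems(2,3), of \<iota>] by blast
  then obtain i where i: "Y1 i \<noteq> 0" "\<And>j. Y1 j \<noteq> 0 \<Longrightarrow> w (Y1 j) = w (Y1 i)" by blast
  show ?case
  proof (cases "w (Y1 i) = 1")
    case True
    then show ?thesis using Y1(1) i(1) by blast
  next
    case False
    then have g: "w (Y1 i) > 1" using Y1(3) i(1) by force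
    then have "w (Y1 i) > 0" by simp
    have not_both: "\<not> (w (Y1 i) dvd w P \<and> w (Y1 i) dvd w Q)"
      using not_dvd_consecutive[OF g, of "w Q"] PQ by simp
    obtain L' Y' where L': "coeff_subfield \<iota> w L'" and Y': "(transf_step \<iota> w)\<^sup>*\<^sup>* Y1 Y'" "Y' i \<noteq> 0"
        "\<forall>j. Y' j \<noteq> 0 \<longrightarrow> 1 \<le> w (Y' j)"
      and keep: "\<And>s z. formal_order_ge w L Y1 s z \<Longrightarrow> formal_order_ge w L' Y' s z"
      and raise: "\<And>s z. formal_order_ge w L Y1 s z \<Longrightarrow> z \<noteq> 0 \<Longrightarrow> \<not> w (Y1 i) dvd w z \<Longrightarrow>
        formal_order_ge w L' Y' (s + 1) z"
      using coord_change_raises_order[where Y = Y1 and g = "w (Y1 i)",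
          OF complete char less.prems(1) \<open>w (Y1 i) > 0\<close> i(2) i(1)] by blast
    have P1: "formal_order_ge w L Y1 sP P" and Q1: "formal_order_ge w L Y1 sQ Q"
      using Y1(2) less.prems(4,5) by blast+
    have ord_le: "s \<le> w z" if "formal_order_ge w L' Y' s z" "z \<noteq> 0" for s z
      using formal_order_ge_le_val[OF _ that] L' by (simp add: coeff_subfield_iff unit_subfield_def)
    from not_both consider "\<not> w (Y1 i) dvd w P" | "\<not> w (Y1 i) dvd w Q" by blast
    then obtain sP' sQ' where "formal_order_ge w L' Y' sP' P" "formal_order_ge w L' Y' sQ' Q"
      "nat (w P - sP') + nat (w Q - sQ') < nat (w P - sP) + nat (w Q - sQ)"
    proof cases
      case 1
      then show ?thesis using that[OF raise[OF P1 P] keep[OF Q1]] ord_le[OF raise[OF P1 P] P] by simp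
    next
      case 2
      then show ?thesis using that[OF keep[OF P1] raise[OF Q1 Q]] ord_le[OF raise[OF Q1 Q] Q] by simp
    qed
    then show ?thesis using less.hyps[OF _ L' Y'(3,2)] Y1(1) Y'(1) by (meson rtranclp_trans)
  qed
qed

end

section \<open>Embedded power series\<close>

lemma finite_exponents_le: "finite {\<gamma> :: 'n::finite \<Rightarrow> nat. \<forall>j. \<gamma> j \<le> \<beta> j}"
proof (rule finite_subset[OF _ finite_PiE[of UNIV "\<lambda>j. {..\<beta> j}"]])
  show "{\<gamma>. \<forall>j. \<gamma> j \<le> \<beta> j} \<subseteq> PiE UNIV (\<lambda>j. {..\<beta> j})"
    unfolding PiE_UNIV_domain by (auto simp: Pi_def)
qed auto

lemma ps_mult_X:
  fixes G :: "('n::finite, 'k::comm_ring_1) mps"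
  shows "ps_mult (ps_X i) G = (\<lambda>\<beta>. if 1 \<le> \<beta> i then G (\<beta>(i := \<beta> i - 1)) else 0)"
proof
  fix \<beta> :: "'n \<Rightarrow> nat"
  define e where "e = (\<lambda>j. if j = i then 1 else 0 :: nat)"
  have "ps_mult (ps_X i) G \<beta> = (\<Sum>\<gamma>\<in>{\<gamma>. \<forall>j. \<gamma> j \<le> \<beta> j}. if \<gamma> = e then G (\<lambda>j. \<beta> j - \<gamma> j) else 0)"
    unfolding ps_mult_def ps_X_def e_def by (intro sum.cong) auto
  also have "\<dots> = (if e \<in> {\<gamma>. \<forall>j. \<gamma> j \<le> \<beta> j} then G (\<lambda>j. \<beta> j - e j) else 0)"
    by (rule sum.delta[OF finite_exponents_le])
  also have "\<dots> = (if 1 \<le> \<beta> i then G (\<beta>(i := \<beta> i - 1)) else 0)"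
  proof -
    have "(\<forall>j. e j \<le> \<beta> j) \<longleftrightarrow> 1 \<le> \<beta> i" "(\<lambda>j. \<beta> j - e j) = \<beta>(i := \<beta> i - 1)"
      by (auto simp: e_def)
    then show ?thesis by simp
  qed
  finally show "ps_mult (ps_X i) G \<beta> = (if 1 \<le> \<beta> i then G (\<beta>(i := \<beta> i - 1)) else 0)" .
qed

lemma ps_mult_const:
  "ps_mult (ps_const a :: ('n::finite, 'k::comm_ring_1) mps) (ps_const b) = ps_const (a * b)"
proof
  fix \<beta> :: "'n \<Rightarrow> nat"
  have "ps_mult (ps_const a :: ('n, 'k) mps) (ps_const b) \<beta> =
      (\<Sum>\<gamma>\<in>{\<gamma>. \<forall>j. \<gamma> j \<le> \<beta> j}. if \<gamma> = (\<lambda>_. 0) then a * ps_const b (\<lambda>j. \<beta> j - \<gamma> j) else 0)"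
    unfolding ps_mult_def by (intro sum.cong) (auto simp: ps_const_def)
  also have "\<dots> = a * ps_const b \<beta>"
    by (subst sum.delta[OF finite_exponents_le]) auto
  finally show "ps_mult (ps_const a :: ('n, 'k) mps) (ps_const b) \<beta> = ps_const (a * b) \<beta>"
    by (simp add: ps_const_def)
qed

lemma ps_add_const: "ps_add (ps_const a) (ps_const b) = ps_const (a + b)"
  by (auto simp: ps_add_def ps_const_def)

lemma ps_const_0: "ps_const 0 = ps_zero"
  by (auto simp: ps_const_def ps_zero_def)

text \<open>A cofactor of X_i in the decomposition F = F(0) + \<Sum>i. X_i \<cdot> ps_cofactor F i: each
  monomial of positive degree is assigned to one (arbitrarily chosen) variable dividing it.\<close>

definition ps_cofactor :: "('n, 'k::comm_ring_1) mps \<Rightarrow> 'n \<Rightarrow> ('n, 'k) mps" where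
  "ps_cofactor F i = (\<lambda>\<gamma>. if (SOME j. 0 < (\<gamma>(i := \<gamma> i + 1)) j) = i then F (\<gamma>(i := \<gamma> i + 1)) else 0)"

lemma ps_decompose:
  fixes F :: "('n::finite, 'k::comm_ring_1) mps"
  shows "F = ps_add (ps_const (F (\<lambda>_. 0))) (\<lambda>\<beta>. \<Sum>i\<in>UNIV. ps_mult (ps_X i) (ps_cofactor F i) \<beta>)"
proof
  fix \<beta> :: "'n \<Rightarrow> nat"
  define j where "j = (SOME j. 0 < \<beta> j)"
  have "ps_mult (ps_X i) (ps_cofactor F i) \<beta> = (if 1 \<le> \<beta> i \<and> j = i then F \<beta> else 0)" for i
  proof (cases "1 \<le> \<beta> i")
    case True
    then have "(\<beta>(i := \<beta> i - 1))(i := (\<beta>(i := \<beta> i - 1)) i + 1) = \<beta>" by auto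
    then show ?thesis using True unfolding ps_mult_X ps_cofactor_def j_def by (simp only: if_True simp_thms)
  qed (simp add: ps_mult_X)
  then have S: "(\<Sum>i\<in>UNIV. ps_mult (ps_X i) (ps_cofactor F i) \<beta>) = (\<Sum>i\<in>UNIV. if 1 \<le> \<beta> i \<and> j = i then F \<beta> else 0)"
    by simp
  show "F \<beta> = ps_add (ps_const (F (\<lambda>_. 0))) (\<lambda>\<beta>. \<Sum>i\<in>UNIV. ps_mult (ps_X i) (ps_cofactor F i) \<beta>) \<beta>"
  proof (cases "\<beta> = (\<lambda>_. 0)")
    case True
    then show ?thesis using S by (simp add: ps_add_def ps_const_def)
  next
    case False
    then have "0 < \<beta> j" unfolding j_def by (metis (full_types) neq0_conv someI_ex)
    then have "(\<Sum>i\<in>UNIV. if 1 \<le> \<beta> i \<and> j = i then F \<beta> else 0) = (\<Sum>i\<in>UNIV. if j = i then F \<beta> else 0)"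
      by (intro sum.cong) auto
    then have "(\<Sum>i\<in>UNIV. if 1 \<le> \<beta> i \<and> j = i then F \<beta> else 0) = F \<beta>" by simp
    then show ?thesis using S False by (simp add: ps_add_def ps_const_def)
  qed
qed

locale series_embedding = valued_field w for w :: "'f::field \<Rightarrow> int" +
  fixes \<iota> :: "('n::finite, 'k::comm_ring_1) mps \<Rightarrow> 'f"
  assumes inj: "inj \<iota>"
    and hom_add: "\<And>f g. \<iota> (ps_add f g) = \<iota> f + \<iota> g"
    and hom_mult: "\<And>f g. \<iota> (ps_mult f g) = \<iota> f * \<iota> g"
    and hom_one: "\<iota> (ps_const 1) = 1"
    and trivial_on_k: "\<And>c. c \<noteq> 0 \<Longrightarrow> w (\<iota> (ps_const c)) = 0"
    and center: "\<And>f. f \<noteq> ps_zero \<Longrightarrow> w (\<iota> f) \<ge> 0 \<and> (w (\<iota> f) > 0 \<longleftrightarrow> f \<in> ps_max_ideal)"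
begin

abbreviation const_image :: "'f set" where
  "const_image \<equiv> range (\<lambda>c. \<iota> (ps_const c))"

lemma embed_zero [simp]: "\<iota> ps_zero = 0"
proof -
  have "ps_add ps_zero ps_zero = (ps_zero :: ('n, 'k) mps)" by (auto simp: ps_add_def ps_zero_def)
  then have "\<iota> ps_zero + 0 = \<iota> ps_zero + \<iota> ps_zero" using hom_add by (metis add.right_neutral)
  then show ?thesis by (metis add_left_cancel)
qed

lemma embed_eq_0_iff [simp]: "\<iota> f = 0 \<longleftrightarrow> f = ps_zero"
  using inj embed_zero by (metis injD)

lemma embed_sum:
  fixes H :: "'n \<Rightarrow> ('n, 'k) mps"
  shows "\<iota> (\<lambda>\<beta>. \<Sum>i\<in>UNIV. H i \<beta>) = (\<Sum>i\<in>UNIV. \<iota> (H i))"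
proof -
  have "\<iota> (\<lambda>\<beta>. \<Sum>i\<in>S. H i \<beta>) = (\<Sum>i\<in>S. \<iota> (H i))" if "finite S" for S
    using that
  proof (induction S rule: finite_induct)
    case empty
    have "(\<lambda>\<beta>. 0) = (ps_zero :: ('n, 'k) mps)" by (simp add: ps_zero_def)
    then show ?case by simp
  next
    case (insert i S)
    have "(\<lambda>\<beta>. \<Sum>i\<in>insert i S. H i \<beta>) = ps_add (H i) (\<lambda>\<beta>. \<Sum>i\<in>S. H i \<beta>)"
      using insert by (auto simp: ps_add_def)
    then show ?case using insert hom_add by simp
  qed
  then show ?thesis by simp
qed

lemma embed_val_ge_0: "val_ge w 0 (\<iota> F)"
  using center[of F] by (cases "F = ps_zero") (auto simp: val_ge_def)

lemma embed_X: "\<iota> (ps_X i) \<noteq> 0" "1 \<le> w (\<iota> (ps_X i))"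
proof -
  let ?e = "\<lambda>j. if j = i then 1 else 0 :: nat"
  have "ps_X i ?e = (1 :: 'k)" "ps_zero ?e = (0 :: 'k)" by (simp_all add: ps_X_def ps_zero_def)
  then have "ps_X i \<noteq> (ps_zero :: ('n, 'k) mps)" by force
  moreover have "ps_X i \<in> (ps_max_ideal :: ('n, 'k) mps set)"
    by (auto simp: ps_max_ideal_def ps_X_def fun_eq_iff)
  ultimately show "\<iota> (ps_X i) \<noteq> 0" "1 \<le> w (\<iota> (ps_X i))" using center[of "ps_X i"] by auto
qed

lemma embed_const_add: "\<iota> (ps_const a) + \<iota> (ps_const b) = \<iota> (ps_const (a + b))"
  using hom_add[of "ps_const a" "ps_const b"] by (simp add: ps_add_const)

lemma embed_const_mult: "\<iota> (ps_const a) * \<iota> (ps_const b) = \<iota> (ps_const (a * b))"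
  using hom_mult[of "ps_const a" "ps_const b"] by (simp add: ps_mult_const)

lemma embed_const_of_nat: "\<iota> (ps_const (of_nat n)) = of_nat n"
  by (induction n) (simp_all add: ps_const_0 hom_one embed_const_add[symmetric] add.commute)

lemma exists_poly_approx:
  "\<exists>p. formal_order_ge w const_image (\<lambda>i. \<iota> (ps_X i)) 0 p \<and> val_ge w (int D) (\<iota> F - p)"
proof (induction D arbitrary: F)
  case 0
  show ?case using embed_val_ge_0[of F] formal_order_ge.zero by (intro exI[of _ 0]) simp
next
  case (Suc D)
  let ?X = "\<lambda>i. \<iota> (ps_X i)"
  have "\<forall>i. \<exists>p. formal_order_ge w const_image ?X 0 p \<and> val_ge w (int D) (\<iota> (ps_cofactor F i) - p)"
    using Suc by blast
  then obtain p where p: "\<And>i. formal_order_ge w const_image ?X 0 (p i) \<and> val_ge w (int D) (\<iota> (ps_cofactor F i) - p i)"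
    by metis
  have X: "formal_order_ge w const_image ?X 0 (?X i)" "val_ge w 1 (?X i)" for i
    using embed_X[of i] formal_order_ge.var[of ?X i 0] by (auto simp: val_ge_def)
  \<comment> \<open>F = F(0) + \<Sum>i. X_i G_i, and each G_i is approximated to order D\<close>
  define q where "q = \<iota> (ps_const (F (\<lambda>_. 0))) + (\<Sum>i\<in>UNIV. ?X i * p i)"
  have "formal_order_ge w const_image ?X 0 (?X i * p i)" for i
    using formal_order_ge.mult[OF X(1) conjunct1[OF p[of i]], of 0] by simp
  then have sum: "formal_order_ge w const_image ?X 0 (\<Sum>i\<in>UNIV. ?X i * p i)"
    by (rule formal_order_ge_sum)
  have "formal_order_ge w const_image ?X 0 q"
    unfolding q_def by (rule formal_order_ge.add[OF formal_order_ge.const sum]) auto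
  moreover have "\<iota> F - q = (\<Sum>i\<in>UNIV. ?X i * (\<iota> (ps_cofactor F i) - p i))"
  proof -
    have "\<iota> F = \<iota> (ps_const (F (\<lambda>_. 0))) + (\<Sum>i\<in>UNIV. \<iota> (ps_mult (ps_X i) (ps_cofactor F i)))"
      by (subst ps_decompose[of F]) (simp add: hom_add embed_sum)
    then show ?thesis by (simp add: q_def hom_mult algebra_simps sum_subtractf)
  qed
  moreover have "val_ge w (int (Suc D)) (\<Sum>i\<in>UNIV. ?X i * (\<iota> (ps_cofactor F i) - p i))"
    using val_ge_mult[OF X(2) conjunct2[OF p]] by (intro val_ge_sum) (simp add: add.commute)
  ultimately show ?case by metis
qed

lemma exists_poly_same_value:
  assumes "F \<noteq> ps_zero"
  obtains p where "formal_order_ge w const_image (\<lambda>i. \<iota> (ps_X i)) 0 p" "p \<noteq> 0" "w p = w (\<iota> F)"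
proof -
  obtain p where p: "formal_order_ge w const_image (\<lambda>i. \<iota> (ps_X i)) 0 p"
    "val_ge w (int (nat (w (\<iota> F) + 1))) (\<iota> F - p)"
    using exists_poly_approx by blast
  then have "val_ge w (w (\<iota> F) + 1) (p - \<iota> F)"
    using center[OF assms] by (simp add: val_ge_diff_commute[of _ p])
  then show ?thesis using that[OF p(1)] val_eq_of_close[of "\<iota> F" p] assms by simp
qed

end

lemma const_image_coeff_subfield:
  fixes \<iota> :: "('n::finite, 'k::field) mps \<Rightarrow> 'f::field"
  assumes "series_embedding w \<iota>"
  shows "coeff_subfield \<iota> w (range (\<lambda>c. \<iota> (ps_const c)))"
proof -
  interpret series_embedding w \<iota> by (fact assms)
  have "is_subfield const_image"
  proof (rule is_subfieldI)
    show "0 \<in> const_image" "1 \<in> const_image"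
      using hom_one embed_zero ps_const_0 by (metis rangeI)+
    show "x + y \<in> const_image" "x * y \<in> const_image" if x: "x \<in> const_image" and y: "y \<in> const_image" for x y
    proof -
      obtain a b where "x = \<iota> (ps_const a)" "y = \<iota> (ps_const b)" using x y by blast
      then show "x + y \<in> const_image" "x * y \<in> const_image"
        by (simp_all add: embed_const_add embed_const_mult)
    qed
    show "- x \<in> const_image" if x: "x \<in> const_image" for x
    proof -
      obtain a where "x = \<iota> (ps_const a)" using x by blast
      moreover have "\<iota> (ps_const a) + \<iota> (ps_const (- a)) = 0"
        using embed_const_add[of a "- a"] by (simp add: ps_const_0)
      ultimately have "- x = \<iota> (ps_const (- a))" by (simp add: minus_unique)
      then show ?thesis by simp
    qed
    show "inverse x \<in> const_image" if x: "x \<in> const_image" "x \<noteq> 0" for x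
    proof -
      obtain a where a: "x = \<iota> (ps_const a)" using x(1) by blast
      then have "a \<noteq> 0" using x(2) ps_const_0 by auto
      then have "x * \<iota> (ps_const (inverse a)) = 1" using a embed_const_mult hom_one by simp
      then have "inverse x = \<iota> (ps_const (inverse a))" by (rule inverse_unique)
      then show ?thesis by simp
    qed
  qed
  moreover have "\<iota> (ps_const c) \<in> val_ring w" for c
    using trivial_on_k[of c] by (cases "c = 0") (auto simp: val_ring_def ps_const_0)
  ultimately show ?thesis by (auto simp: coeff_subfield_iff unit_subfield_def)
qed

lemma series_embedding_of_nat_neq_0:
  fixes \<iota> :: "('n::finite, 'k::field_char_0) mps \<Rightarrow> 'f::field"
  assumes "series_embedding w \<iota>" "n > 0"
  shows "of_nat n \<noteq> (0::'f)"
proof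
  interpret series_embedding w \<iota> by (fact assms(1))
  assume "of_nat n = (0::'f)"
  then have "ps_const (of_nat n) = (ps_zero :: ('n, 'k) mps)"
    using embed_const_of_nat[of n] by simp
  from fun_cong[OF this, of "\<lambda>_. 0"] have "(of_nat n :: 'k) = 0"
    by (simp add: ps_const_def ps_zero_def)
  then show False using assms(2) by simp
qed

theorem theorem3:
  fixes \<iota> :: "(('n::finite \<Rightarrow> nat) \<Rightarrow> 'k::field_char_0) \<Rightarrow> 'f::field"
    and w :: "'f \<Rightarrow> int"
  assumes n2: "CARD('n) \<ge> 2"
    and inj: "inj \<iota>"
    and hom_add: "\<And>f g. \<iota> (ps_add f g) = \<iota> f + \<iota> g"
    and hom_mult: "\<And>f g. \<iota> (ps_mult f g) = \<iota> f * \<iota> g"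
    and hom_one: "\<iota> (ps_const 1) = 1"
    and val: "valuation w"
    and trivial_on_k: "\<And>c. c \<noteq> 0 \<Longrightarrow> w (\<iota> (ps_const c)) = 0"
    and center: "\<And>f. f \<noteq> ps_zero \<Longrightarrow> w (\<iota> f) \<ge> 0 \<and> (w (\<iota> f) > 0 \<longleftrightarrow> f \<in> ps_max_ideal)"
    and value_group: "{w (\<iota> f) - w (\<iota> g) | f g. f \<noteq> ps_zero \<and> g \<noteq> ps_zero} = UNIV"
    and complete: "val_complete w"
    and dense: "val_dense w (frac_image \<iota>)"
  shows "\<exists>Y. (transf_step \<iota> w)\<^sup>*\<^sup>* (\<lambda>i. \<iota> (ps_X i)) Y \<and> (\<exists>i. Y i \<noteq> 0 \<and> w (Y i) = 1)"
proof -
  have emb: "series_embedding w \<iota>"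
    unfolding series_embedding_def series_embedding_axioms_def valued_field_def
    using assms by blast
  interpret series_embedding w \<iota> by (fact emb)
  have "(1::int) \<in> {w (\<iota> f) - w (\<iota> g) | f g. f \<noteq> ps_zero \<and> g \<noteq> ps_zero}"
    unfolding value_group by simp
  then obtain F G where FG: "F \<noteq> ps_zero" "G \<noteq> ps_zero" "w (\<iota> F) = w (\<iota> G) + 1" by auto
  obtain P where P: "formal_order_ge w const_image (\<lambda>i. \<iota> (ps_X i)) 0 P" "P \<noteq> 0" "w P = w (\<iota> F)"
    using exists_poly_same_value[OF FG(1)] .
  obtain Q where Q: "formal_order_ge w const_image (\<lambda>i. \<iota> (ps_X i)) 0 Q" "Q \<noteq> 0" "w Q = w (\<iota> G)"
    using exists_poly_same_value[OF FG(2)] .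
  show ?thesis
    using exists_transf_value_one[OF complete series_embedding_of_nat_neq_0[OF emb] P(2) Q(2) _
        const_image_coeff_subfield[OF emb] _ embed_X(1) P(1) Q(1)] P(3) Q(3) FG(3) embed_X(2)
    by auto
qed

end
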